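(* Let $d\ge2$ and let $b,c\ge0$ be real with $a=\frac1d\big(1-(b+c)\frac{d(d-1)}2\big)\ge0$, and let $$\rho_{bc}=a\sum_{i=0}^{d-1}|ii\rangle\langle ii|+b\sum_{i<j}|\psi^-_{ij}\rangle\langle\psi^-_{ij}|+c\sum_{i<j}|\psi^+_{ij}\rangle\langle\psi^+_{ij}|.$$ If $\rho_{bc}^{PT}\ge0$, then $\rho_{bc}$ is separable.
   Context: $|\psi^{\pm}_{ij}\rangle=\frac1{\sqrt2}(|ij\rangle\pm|ji\rangle)$, sums over $0\le i<j\le d-1$. $\rho^{PT}$ is the partial transpose on the second factor, $\langle ij|\rho^{PT}|kl\rangle=\langle il|\rho|kj\rangle$. A bipartite state is separable if it can be written as $\sum_ip_i|\alpha_i\rangle\langle\alpha_i|\otimes|\beta_i\rangle\langle\beta_i|$ with $p_i\ge0$. *)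

theory Defs
  imports Complex_Main
begin

text \<open>Operators on C^d (x) C^d are represented by their matrix entries
  rho (i,j) (k,l) = <ij|rho|kl>, with indices in {0..<d} x {0..<d}.
  Vectors of C^d (x) C^d are functions nat x nat => complex, vectors of C^d
  are functions nat => complex (only entries with index < d matter).\<close>

type_synonym op2 = "nat \<times> nat \<Rightarrow> nat \<times> nat \<Rightarrow> complex"

definition idx :: "nat \<Rightarrow> (nat \<times> nat) set" where
  "idx d = {0..<d} \<times> {0..<d}"

definition proj :: "(nat \<times> nat \<Rightarrow> complex) \<Rightarrow> op2" where
  "proj v = (\<lambda>x y. v x * cnj (v y))"

definition ket_ii :: "nat \<Rightarrow> nat \<times> nat \<Rightarrow> complex" where
  "ket_ii i = (\<lambda>x. if x = (i, i) then 1 else 0)"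

definition psi_minus :: "nat \<Rightarrow> nat \<Rightarrow> nat \<times> nat \<Rightarrow> complex" where
  "psi_minus i j = (\<lambda>x. ((if x = (i, j) then 1 else 0) - (if x = (j, i) then 1 else 0))
                         / complex_of_real (sqrt 2))"

definition psi_plus :: "nat \<Rightarrow> nat \<Rightarrow> nat \<times> nat \<Rightarrow> complex" where
  "psi_plus i j = (\<lambda>x. ((if x = (i, j) then 1 else 0) + (if x = (j, i) then 1 else 0))
                         / complex_of_real (sqrt 2))"

definition coef_a :: "nat \<Rightarrow> real \<Rightarrow> real \<Rightarrow> real" where
  "coef_a d b c = (1 - (b + c) * (real d * (real d - 1) / 2)) / real d"

definition rho_bc :: "nat \<Rightarrow> real \<Rightarrow> real \<Rightarrow> op2" where
  "rho_bc d b c = (\<lambda>x y.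
      complex_of_real (coef_a d b c) * (\<Sum>i<d. proj (ket_ii i) x y)
    + complex_of_real b * (\<Sum>(i, j)\<in>{(i, j). i < j \<and> j < d}. proj (psi_minus i j) x y)
    + complex_of_real c * (\<Sum>(i, j)\<in>{(i, j). i < j \<and> j < d}. proj (psi_plus i j) x y))"

definition partial_transpose :: "op2 \<Rightarrow> op2" where
  "partial_transpose rho = (\<lambda>(i, j) (k, l). rho (i, l) (k, j))"

text \<open>Positive semidefiniteness on C^d (x) C^d: <v|rho|v> is real and nonnegative
  for every vector v (over C this also forces Hermiticity).\<close>
definition psd :: "nat \<Rightarrow> op2 \<Rightarrow> bool" where
  "psd d rho \<longleftrightarrow> (\<forall>v :: nat \<times> nat \<Rightarrow> complex.
      let q = (\<Sum>x\<in>idx d. \<Sum>y\<in>idx d. cnj (v x) * rho x y * v y)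
      in q \<in> \<real> \<and> Re q \<ge> 0)"

definition separable :: "nat \<Rightarrow> op2 \<Rightarrow> bool" where
  "separable d rho \<longleftrightarrow> (\<exists>(n::nat) (p :: nat \<Rightarrow> real) (\<alpha> :: nat \<Rightarrow> nat \<Rightarrow> complex)
      (\<beta> :: nat \<Rightarrow> nat \<Rightarrow> complex).
      (\<forall>k<n. p k \<ge> 0) \<and>
      (\<forall>x\<in>idx d. \<forall>y\<in>idx d. rho x y =
         (\<Sum>k<n. complex_of_real (p k) * (\<alpha> k (fst x) * cnj (\<alpha> k (fst y)))
                                      * (\<beta> k (snd x) * cnj (\<beta> k (snd y))))))"

end

theory Submission
  imports Defs "HOL-Library.FuncSet"
begin

text \<open>In the computational basis \<open>\<rho>\<^sub>b\<^sub>c\<close> has only three kinds of nonzero entries: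
  \<open>a\<close> at \<open>|mm\<rangle>\<langle>mm|\<close>, \<open>(b+c)/2\<close> at \<open>|ij\<rangle>\<langle>ij|\<close> and \<open>\<gamma> = (c-b)/2\<close> at \<open>|ij\<rangle>\<langle>ji|\<close> (\<open>i \<noteq> j\<close>).
  On the vectors \<open>\<Sum>\<^sub>m w\<^sub>m |mm\<rangle>\<close> the partial transpose acts as \<open>(a-\<gamma>) I + \<gamma> J\<close>, so PPT gives
  \<open>\<gamma> \<le> a\<close> and \<open>0 \<le> a + (d-1)\<gamma>\<close>.

  Conversely, averaging \<open>|\<alpha>\<^sub>f\<rangle>\<langle>\<alpha>\<^sub>f| \<otimes> |\<alpha>\<^sub>f\<rangle>\<langle>\<alpha>\<^sub>f|\<close> over all phase vectors
  \<open>\<alpha>\<^sub>f = \<Sum>\<^sub>m \<i>^(f m) |m\<rangle>\<close> kills every matrix unit \<open>|x\<^sub>1x\<^sub>2\<rangle>\<langle>y\<^sub>1y\<^sub>2|\<close> except those with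
  \<open>{x\<^sub>1,x\<^sub>2} = {y\<^sub>1,y\<^sub>2}\<close> as multisets. This separable state supplies \<open>\<gamma> \<ge> 0\<close>; for \<open>\<gamma> < 0\<close> the same
  average over each two-element index set \<open>{i,j}\<close>, with the sign of \<open>|j\<rangle>\<close> flipped in the second
  factor, supplies the negative entries at \<open>|ij\<rangle>\<langle>ji|\<close>. In both cases the remainder is diagonal,
  and its entries are nonnegative exactly by the two PPT inequalities.\<close>

definition prod_proj :: "(nat \<Rightarrow> complex) \<Rightarrow> (nat \<Rightarrow> complex) \<Rightarrow> op2" where
  "prod_proj \<alpha> \<beta> = (\<lambda>x y. (\<alpha> (fst x) * cnj (\<alpha> (fst y))) * (\<beta> (snd x) * cnj (\<beta> (snd y))))"

lemma separable_iff_prod_proj: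
  "separable d \<rho> \<longleftrightarrow> (\<exists>(n::nat) p \<alpha> \<beta>. (\<forall>k<n. p k \<ge> 0) \<and>
     (\<forall>x\<in>idx d. \<forall>y\<in>idx d. \<rho> x y = (\<Sum>k<n. complex_of_real (p k) * prod_proj (\<alpha> k) (\<beta> k) x y)))"
  unfolding separable_def prod_proj_def by (simp add: mult.assoc)

lemma separable_cong:
  assumes "separable d \<rho>" and "\<And>x y. x \<in> idx d \<Longrightarrow> y \<in> idx d \<Longrightarrow> \<rho> x y = \<rho>' x y"
  shows "separable d \<rho>'"
proof -
  obtain n :: nat and p \<alpha> \<beta> where "\<forall>k<n. p k \<ge> 0"
    and "\<forall>x\<in>idx d. \<forall>y\<in>idx d. \<rho> x y = (\<Sum>k<n. complex_of_real (p k) * prod_proj (\<alpha> k) (\<beta> k) x y)"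
    using assms(1) unfolding separable_iff_prod_proj by blast
  with assms(2) show ?thesis
    unfolding separable_iff_prod_proj by (intro exI[of _ n] exI[of _ p] exI[of _ \<alpha>] exI[of _ \<beta>]) simp
qed

lemma separable_zero: "separable d (\<lambda>x y. 0)"
  unfolding separable_def by (rule exI[of _ 0]) simp

lemma separable_prod_proj: "separable d (prod_proj \<alpha> \<beta>)"
  unfolding separable_iff_prod_proj
  by (intro exI[of _ 1] exI[of _ "\<lambda>_. 1"] exI[of _ "\<lambda>_. \<alpha>"] exI[of _ "\<lambda>_. \<beta>"]) simp

lemma separable_scale:
  assumes "separable d \<rho>" and "q \<ge> 0"
  shows "separable d (\<lambda>x y. complex_of_real q * \<rho> x y)"
proof -
  obtain n :: nat and p \<alpha> \<beta> where "\<forall>k<n. p k \<ge> 0"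
    and "\<forall>x\<in>idx d. \<forall>y\<in>idx d. \<rho> x y = (\<Sum>k<n. complex_of_real (p k) * prod_proj (\<alpha> k) (\<beta> k) x y)"
    using assms(1) unfolding separable_iff_prod_proj by blast
  then show ?thesis
    unfolding separable_iff_prod_proj using assms(2)
    by (intro exI[of _ n] exI[of _ "\<lambda>k. q * p k"] exI[of _ \<alpha>] exI[of _ \<beta>])
      (simp add: sum_distrib_left mult.assoc)
qed

lemma sum_lessThan_add_split:
  fixes f :: "nat \<Rightarrow> 'a::comm_monoid_add"
  shows "(\<Sum>k<m + n. f k) = (\<Sum>k<m. f k) + (\<Sum>k<n. f (m + k))"
  by (induct n) (simp_all add: add.assoc)

lemma separable_add:
  assumes "separable d \<rho>\<^sub>1" and "separable d \<rho>\<^sub>2"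
  shows "separable d (\<lambda>x y. \<rho>\<^sub>1 x y + \<rho>\<^sub>2 x y)"
proof -
  obtain n\<^sub>1 :: nat and p\<^sub>1 \<alpha>\<^sub>1 \<beta>\<^sub>1 where p\<^sub>1: "\<forall>k<n\<^sub>1. p\<^sub>1 k \<ge> 0"
    and \<rho>\<^sub>1: "\<forall>x\<in>idx d. \<forall>y\<in>idx d.
      \<rho>\<^sub>1 x y = (\<Sum>k<n\<^sub>1. complex_of_real (p\<^sub>1 k) * prod_proj (\<alpha>\<^sub>1 k) (\<beta>\<^sub>1 k) x y)"
    using assms(1) unfolding separable_iff_prod_proj by blast
  obtain n\<^sub>2 :: nat and p\<^sub>2 \<alpha>\<^sub>2 \<beta>\<^sub>2 where p\<^sub>2: "\<forall>k<n\<^sub>2. p\<^sub>2 k \<ge> 0"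
    and \<rho>\<^sub>2: "\<forall>x\<in>idx d. \<forall>y\<in>idx d.
      \<rho>\<^sub>2 x y = (\<Sum>k<n\<^sub>2. complex_of_real (p\<^sub>2 k) * prod_proj (\<alpha>\<^sub>2 k) (\<beta>\<^sub>2 k) x y)"
    using assms(2) unfolding separable_iff_prod_proj by blast
  define p where "p k = (if k < n\<^sub>1 then p\<^sub>1 k else p\<^sub>2 (k - n\<^sub>1))" for k
  define \<alpha> where "\<alpha> k = (if k < n\<^sub>1 then \<alpha>\<^sub>1 k else \<alpha>\<^sub>2 (k - n\<^sub>1))" for k
  define \<beta> where "\<beta> k = (if k < n\<^sub>1 then \<beta>\<^sub>1 k else \<beta>\<^sub>2 (k - n\<^sub>1))" for k
  show ?thesis
    unfolding separable_iff_prod_proj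
  proof (intro exI conjI ballI allI impI)
    show "0 \<le> p k" if "k < n\<^sub>1 + n\<^sub>2" for k
      using that p\<^sub>1 p\<^sub>2 by (auto simp: p_def)
    fix x y assume "x \<in> idx d" "y \<in> idx d"
    then show "\<rho>\<^sub>1 x y + \<rho>\<^sub>2 x y
        = (\<Sum>k<n\<^sub>1 + n\<^sub>2. complex_of_real (p k) * prod_proj (\<alpha> k) (\<beta> k) x y)"
      unfolding sum_lessThan_add_split using \<rho>\<^sub>1 \<rho>\<^sub>2 by (simp add: p_def \<alpha>_def \<beta>_def)
  qed
qed

lemma separable_sum:
  assumes "finite A" and "\<And>i. i \<in> A \<Longrightarrow> separable d (\<rho> i)"
  shows "separable d (\<lambda>x y. \<Sum>i\<in>A. \<rho> i x y)"
  using assms by (induction A rule: finite_induct) (simp_all add: separable_zero separable_add)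

definition unit_vec :: "nat \<Rightarrow> nat \<Rightarrow> complex" where
  "unit_vec k = (\<lambda>m. of_bool (m = k))"

lemma separable_diagonal:
  assumes "\<And>z. w z \<ge> 0"
  shows "separable d (\<lambda>x y. of_bool (x = y) * complex_of_real (w x))"
proof -
  have "separable d (\<lambda>x y. \<Sum>z\<in>idx d.
      complex_of_real (w z) * prod_proj (unit_vec (fst z)) (unit_vec (snd z)) x y)"
    by (intro separable_sum separable_scale separable_prod_proj assms) (simp add: idx_def)
  then show ?thesis
  proof (rule separable_cong)
    fix x y :: "nat \<times> nat" assume "x \<in> idx d"
    have "complex_of_real (w z) * prod_proj (unit_vec (fst z)) (unit_vec (snd z)) x y
        = (if z = x then of_bool (x = y) * complex_of_real (w x) else 0)" for z
      by (cases x; cases y; cases z) (auto simp: prod_proj_def unit_vec_def)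
    then show "(\<Sum>z\<in>idx d. complex_of_real (w z) * prod_proj (unit_vec (fst z)) (unit_vec (snd z)) x y)
        = of_bool (x = y) * complex_of_real (w x)"
      using \<open>x \<in> idx d\<close> by (simp only: sum.delta idx_def) simp
  qed
qed

lemma sqrt2_divide_mult:
  "(u / complex_of_real (sqrt 2)) * (v / complex_of_real (sqrt 2)) = u * v / 2"
proof -
  have "complex_of_real (sqrt 2) * complex_of_real (sqrt 2) = 2"
    by (simp flip: of_real_mult)
  then show ?thesis by (simp add: times_divide_times_eq)
qed

lemma swap_eq_Pair_iff: "prod.swap x = (i, j) \<longleftrightarrow> x = (j, i)"
  by (cases x) auto

lemma swap_inj_iff: "prod.swap x = prod.swap y \<longleftrightarrow> x = y"
  by (metis swap_swap)

lemma psi_minus_eq: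
  "psi_minus i j x = (of_bool (x = (i, j)) - of_bool (prod.swap x = (i, j))) / complex_of_real (sqrt 2)"
  by (simp only: psi_minus_def swap_eq_Pair_iff of_bool_def)

lemma psi_plus_eq:
  "psi_plus i j x = (of_bool (x = (i, j)) + of_bool (prod.swap x = (i, j))) / complex_of_real (sqrt 2)"
  by (simp only: psi_plus_def swap_eq_Pair_iff of_bool_def)

lemma cnj_of_bool: "cnj (of_bool P) = of_bool P"
  by (cases P) simp_all

lemma proj_psi_minus:
  "proj (psi_minus i j) x y = (of_bool (x = (i, j)) - of_bool (prod.swap x = (i, j)))
      * (of_bool (y = (i, j)) - of_bool (prod.swap y = (i, j))) / 2"
  unfolding proj_def psi_minus_eq
  by (simp only: complex_cnj_diff complex_cnj_divide cnj_of_bool complex_cnj_complex_of_real sqrt2_divide_mult)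

lemma proj_psi_plus:
  "proj (psi_plus i j) x y = (of_bool (x = (i, j)) + of_bool (prod.swap x = (i, j)))
      * (of_bool (y = (i, j)) + of_bool (prod.swap y = (i, j))) / 2"
  unfolding proj_def psi_plus_eq
  by (simp only: complex_cnj_add complex_cnj_divide cnj_of_bool complex_cnj_complex_of_real sqrt2_divide_mult)

lemma sum_of_bool_mult_of_bool:
  assumes "finite P"
  shows "(\<Sum>z\<in>P. of_bool (u = z) * of_bool (w = z)) = (of_bool (u = w \<and> u \<in> P) :: 'a::semiring_1)"
proof -
  have "(\<Sum>z\<in>P. of_bool (u = z) * of_bool (w = z)) = (\<Sum>z\<in>P. if u = z then of_bool (u = w) else (0::'a))"
    by (intro sum.cong) auto
  then show ?thesis using assms by simp
qed

text \<open>In the inner \<open>else\<close> branch \<open>x \<noteq> y\<close>, so \<open>x = prod.swap y\<close> already forces \<open>fst x \<noteq> snd x\<close>.\<close>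

definition swap_op :: "real \<Rightarrow> real \<Rightarrow> real \<Rightarrow> op2" where
  "swap_op \<alpha> \<beta> \<gamma> = (\<lambda>x y. complex_of_real
     (if x = y then if fst x = snd x then \<alpha> else \<beta> else if x = prod.swap y then \<gamma> else 0))"

lemma sum_upper_pairs_of_bool:
  assumes "x \<in> idx d"
  defines "P \<equiv> {(i, j). i < j \<and> j < d}"
  shows sum_upper_pairs_same:
      "(\<Sum>z\<in>P. of_bool (x = z) * of_bool (y = z) + of_bool (prod.swap x = z) * of_bool (prod.swap y = z))
        = (of_bool (x = y \<and> fst x \<noteq> snd x) :: complex)"
    and sum_upper_pairs_swapped:
      "(\<Sum>z\<in>P. of_bool (x = z) * of_bool (prod.swap y = z) + of_bool (prod.swap x = z) * of_bool (y = z))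
        = (of_bool (x = prod.swap y \<and> fst x \<noteq> snd x) :: complex)"
proof -
  have "finite P"
    by (rule finite_subset[of _ "{..<d} \<times> {..<d}"]) (auto simp: P_def)
  have in_P: "x \<in> P \<longleftrightarrow> fst x < snd x" "prod.swap x \<in> P \<longleftrightarrow> snd x < fst x"
    using assms unfolding P_def idx_def by (cases x; auto)+
  show "(\<Sum>z\<in>P. of_bool (x = z) * of_bool (y = z) + of_bool (prod.swap x = z) * of_bool (prod.swap y = z))
      = (of_bool (x = y \<and> fst x \<noteq> snd x) :: complex)"
    unfolding sum.distrib sum_of_bool_mult_of_bool[OF \<open>finite P\<close>] in_P swap_inj_iff
    by (cases "x = y") (auto simp: neq_iff)
  show "(\<Sum>z\<in>P. of_bool (x = z) * of_bool (prod.swap y = z) + of_bool (prod.swap x = z) * of_bool (y = z))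
      = (of_bool (x = prod.swap y \<and> fst x \<noteq> snd x) :: complex)"
    unfolding sum.distrib sum_of_bool_mult_of_bool[OF \<open>finite P\<close>] in_P
    by (cases "x = prod.swap y") (auto simp: neq_iff)
qed

lemma sum_proj_psi_minus:
  assumes "x \<in> idx d"
  shows "(\<Sum>(i, j)\<in>{(i, j). i < j \<and> j < d}. proj (psi_minus i j) x y)
    = (of_bool (x = y \<and> fst x \<noteq> snd x) - of_bool (x = prod.swap y \<and> fst x \<noteq> snd x)) / 2"
proof -
  have "proj (psi_minus (fst z) (snd z)) x y
      = ((of_bool (x = z) * of_bool (y = z) + of_bool (prod.swap x = z) * of_bool (prod.swap y = z))
       - (of_bool (x = z) * of_bool (prod.swap y = z) + of_bool (prod.swap x = z) * of_bool (y = z))) / 2" for z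
    by (simp add: proj_psi_minus algebra_simps)
  then have "(\<Sum>(i, j)\<in>{(i, j). i < j \<and> j < d}. proj (psi_minus i j) x y)
      = ((\<Sum>z\<in>{(i, j). i < j \<and> j < d}. of_bool (x = z) * of_bool (y = z)
            + of_bool (prod.swap x = z) * of_bool (prod.swap y = z))
       - (\<Sum>z\<in>{(i, j). i < j \<and> j < d}. of_bool (x = z) * of_bool (prod.swap y = z)
            + of_bool (prod.swap x = z) * of_bool (y = z))) / 2"
    by (simp only: split_def sum_divide_distrib[symmetric] sum_subtractf)
  then show ?thesis
    by (simp only: sum_upper_pairs_same[OF assms] sum_upper_pairs_swapped[OF assms])
qed

lemma sum_proj_psi_plus:
  assumes "x \<in> idx d"
  shows "(\<Sum>(i, j)\<in>{(i, j). i < j \<and> j < d}. proj (psi_plus i j) x y)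
    = (of_bool (x = y \<and> fst x \<noteq> snd x) + of_bool (x = prod.swap y \<and> fst x \<noteq> snd x)) / 2"
proof -
  have "proj (psi_plus (fst z) (snd z)) x y
      = ((of_bool (x = z) * of_bool (y = z) + of_bool (prod.swap x = z) * of_bool (prod.swap y = z))
       + (of_bool (x = z) * of_bool (prod.swap y = z) + of_bool (prod.swap x = z) * of_bool (y = z))) / 2" for z
    by (simp add: proj_psi_plus algebra_simps)
  then have "(\<Sum>(i, j)\<in>{(i, j). i < j \<and> j < d}. proj (psi_plus i j) x y)
      = ((\<Sum>z\<in>{(i, j). i < j \<and> j < d}. of_bool (x = z) * of_bool (y = z)
            + of_bool (prod.swap x = z) * of_bool (prod.swap y = z))
       + (\<Sum>z\<in>{(i, j). i < j \<and> j < d}. of_bool (x = z) * of_bool (prod.swap y = z)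
            + of_bool (prod.swap x = z) * of_bool (y = z))) / 2"
    by (simp only: split_def sum_divide_distrib[symmetric] sum.distrib)
  then show ?thesis
    by (simp only: sum_upper_pairs_same[OF assms] sum_upper_pairs_swapped[OF assms])
qed

lemma sum_proj_ket_ii:
  assumes "x \<in> idx d"
  shows "(\<Sum>i<d. proj (ket_ii i) x y) = of_bool (x = y \<and> fst x = snd x)"
proof -
  have "proj (ket_ii i) x y = (if i = fst x then of_bool (x = y \<and> fst x = snd x) else 0)" for i
    by (cases x; cases y) (auto simp: proj_def ket_ii_def)
  then show ?thesis
    using assms by (auto simp: idx_def)
qed

lemma rho_bc_eq_swap_op:
  assumes "x \<in> idx d"
  shows "rho_bc d b c x y = swap_op (coef_a d b c) ((b + c) / 2) ((c - b) / 2) x y"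
proof -
  consider "x = y" "fst x = snd x" | "x = y" "x \<noteq> prod.swap y" "fst x \<noteq> snd x"
    | "x \<noteq> y" "x = prod.swap y" "fst x \<noteq> snd x" | "x \<noteq> y" "x \<noteq> prod.swap y"
    by (cases x; cases y) auto
  then show ?thesis
    unfolding rho_bc_def sum_proj_ket_ii[OF assms] sum_proj_psi_minus[OF assms] sum_proj_psi_plus[OF assms]
      swap_op_def
    by cases (simp_all add: field_simps)
qed

text \<open>An index occurs at most twice in \<open>|x\<^sub>1x\<^sub>2\<rangle>\<langle>y\<^sub>1y\<^sub>2|\<close>, so the exponents below never exceed 2 and
  fourth roots of unity separate them; with signs \<open>\<plusminus>1\<close> alone, \<open>|mm\<rangle>\<langle>m'm'|\<close> would survive.\<close>

lemma sum_fourth_roots_orthogonal: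
  assumes "p \<le> 2" and "q \<le> 2"
  shows "(\<Sum>r<4. \<i> ^ (r * p) * (- \<i>) ^ (r * q)) = (if p = q then 4 else (0::complex))"
proof -
  have "p \<in> {0, 1, 2}" "q \<in> {0, 1, 2}"
    using assms by auto
  then show ?thesis
    by (auto simp: eval_nat_numeral power_mult_distrib)
qed

lemma pair_multiplicities_eq_iff:
  fixes x\<^sub>1 x\<^sub>2 y\<^sub>1 y\<^sub>2 :: nat
  assumes "x\<^sub>1 \<in> S" "x\<^sub>2 \<in> S" "y\<^sub>1 \<in> S" "y\<^sub>2 \<in> S"
  shows "(\<forall>m\<in>S. (if x\<^sub>1 = m then 1 else 0) + (if x\<^sub>2 = m then 1 else 0)
               = (if y\<^sub>1 = m then 1 else 0) + (if y\<^sub>2 = m then (1::nat) else 0))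
     \<longleftrightarrow> (x\<^sub>1, x\<^sub>2) = (y\<^sub>1, y\<^sub>2) \<or> (x\<^sub>1, x\<^sub>2) = (y\<^sub>2, y\<^sub>1)"
proof
  assume H: "\<forall>m\<in>S. (if x\<^sub>1 = m then 1 else 0) + (if x\<^sub>2 = m then 1 else 0)
               = (if y\<^sub>1 = m then 1 else 0) + (if y\<^sub>2 = m then (1::nat) else 0)"
  have "x\<^sub>1 = y\<^sub>1 \<or> x\<^sub>1 = y\<^sub>2"
    using H[rule_format, OF assms(1)] by (auto split: if_splits)
  moreover have "x\<^sub>2 = y\<^sub>1 \<or> x\<^sub>2 = y\<^sub>2"
    using H[rule_format, OF assms(2)] by (auto split: if_splits)
  moreover have "y\<^sub>1 = x\<^sub>1 \<or> y\<^sub>1 = x\<^sub>2"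
    using H[rule_format, OF assms(3)] by (auto split: if_splits)
  moreover have "y\<^sub>2 = x\<^sub>1 \<or> y\<^sub>2 = x\<^sub>2"
    using H[rule_format, OF assms(4)] by (auto split: if_splits)
  ultimately show "(x\<^sub>1, x\<^sub>2) = (y\<^sub>1, y\<^sub>2) \<or> (x\<^sub>1, x\<^sub>2) = (y\<^sub>2, y\<^sub>1)"
    using H[rule_format, OF assms(1)] by (auto split: if_splits)
qed auto

definition phase_vec :: "nat set \<Rightarrow> (nat \<Rightarrow> nat) \<Rightarrow> nat \<Rightarrow> complex" where
  "phase_vec S f m = (if m \<in> S then \<i> ^ f m else 0)"

definition phase_twirl :: "nat set \<Rightarrow> (nat \<Rightarrow> complex) \<Rightarrow> op2" where
  "phase_twirl S s = (\<lambda>x y. \<Sum>f\<in>S \<rightarrow>\<^sub>E {..<4}.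
     prod_proj (phase_vec S f) (\<lambda>m. s m * phase_vec S f m) x y)"

lemma separable_phase_twirl: "finite S \<Longrightarrow> separable d (phase_twirl S s)"
  unfolding phase_twirl_def by (intro separable_sum separable_prod_proj) (simp add: finite_PiE)

lemma sum_phases:
  fixes x\<^sub>1 x\<^sub>2 y\<^sub>1 y\<^sub>2 :: nat
  assumes S: "finite S" and in_S: "x\<^sub>1 \<in> S" "x\<^sub>2 \<in> S" "y\<^sub>1 \<in> S" "y\<^sub>2 \<in> S"
  shows "(\<Sum>f\<in>S \<rightarrow>\<^sub>E {..<4}. \<i> ^ f x\<^sub>1 * \<i> ^ f x\<^sub>2 * (- \<i>) ^ f y\<^sub>1 * (- \<i>) ^ f y\<^sub>2)
       = (if (x\<^sub>1, x\<^sub>2) = (y\<^sub>1, y\<^sub>2) \<or> (x\<^sub>1, x\<^sub>2) = (y\<^sub>2, y\<^sub>1) then 4 ^ card S else 0)"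
proof -
  define P where "P m = (if x\<^sub>1 = m then 1 else 0) + (if x\<^sub>2 = m then 1 else (0::nat))" for m
  define Q where "Q m = (if y\<^sub>1 = m then 1 else 0) + (if y\<^sub>2 = m then 1 else (0::nat))" for m
  define g where "g m r = \<i> ^ (r * P m) * (- \<i>) ^ (r * Q m)" for m r
  have "g m r = (if x\<^sub>1 = m then \<i> ^ r else 1) * (if x\<^sub>2 = m then \<i> ^ r else 1)
      * ((if y\<^sub>1 = m then (- \<i>) ^ r else 1) * (if y\<^sub>2 = m then (- \<i>) ^ r else 1))" for m r
    unfolding g_def P_def Q_def by (simp add: distrib_left power_add)
  then have prod_g: "(\<Prod>m\<in>S. g m (f m)) = \<i> ^ f x\<^sub>1 * \<i> ^ f x\<^sub>2 * (- \<i>) ^ f y\<^sub>1 * (- \<i>) ^ f y\<^sub>2" for f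
    using S in_S by (simp add: prod.distrib prod.delta mult.assoc)
  have "(\<Sum>f\<in>S \<rightarrow>\<^sub>E {..<4}. \<i> ^ f x\<^sub>1 * \<i> ^ f x\<^sub>2 * (- \<i>) ^ f y\<^sub>1 * (- \<i>) ^ f y\<^sub>2)
      = (\<Prod>m\<in>S. \<Sum>r<4. g m r)"
    unfolding prod_g[symmetric] by (rule prod_sum_PiE[symmetric]) (use S in auto)
  also have "\<dots> = (\<Prod>m\<in>S. if P m = Q m then 4 else 0)"
    unfolding g_def by (intro prod.cong refl sum_fourth_roots_orthogonal) (simp_all add: P_def Q_def)
  also have "\<dots> = (if \<forall>m\<in>S. P m = Q m then 4 ^ card S else 0)"
    using S by (auto simp: prod_zero_iff)
  finally show ?thesis
    unfolding P_def Q_def pair_multiplicities_eq_iff[OF in_S] .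
qed

lemma phase_twirl_eq:
  assumes "finite S"
  shows "phase_twirl S s x y =
    (if fst x \<in> S \<and> snd x \<in> S \<and> fst y \<in> S \<and> snd y \<in> S \<and> (x = y \<or> x = prod.swap y)
     then 4 ^ card S * (s (snd x) * cnj (s (snd y))) else 0)"
proof (cases "fst x \<in> S \<and> snd x \<in> S \<and> fst y \<in> S \<and> snd y \<in> S")
  case True
  obtain x\<^sub>1 x\<^sub>2 y\<^sub>1 y\<^sub>2 where xy: "x = (x\<^sub>1, x\<^sub>2)" "y = (y\<^sub>1, y\<^sub>2)"
    by (cases x, cases y)
  have in_S: "x\<^sub>1 \<in> S" "x\<^sub>2 \<in> S" "y\<^sub>1 \<in> S" "y\<^sub>2 \<in> S"
    using True xy by auto
  have "phase_twirl S s x y = (\<Sum>f\<in>S \<rightarrow>\<^sub>E {..<4}.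
      (s x\<^sub>2 * cnj (s y\<^sub>2)) * (\<i> ^ f x\<^sub>1 * \<i> ^ f x\<^sub>2 * (- \<i>) ^ f y\<^sub>1 * (- \<i>) ^ f y\<^sub>2))"
    unfolding phase_twirl_def prod_proj_def phase_vec_def xy using in_S
    by (intro sum.cong refl) (simp add: mult_ac)
  also have "\<dots> = (s x\<^sub>2 * cnj (s y\<^sub>2))
      * (if (x\<^sub>1, x\<^sub>2) = (y\<^sub>1, y\<^sub>2) \<or> (x\<^sub>1, x\<^sub>2) = (y\<^sub>2, y\<^sub>1) then 4 ^ card S else 0)"
    by (simp add: sum_distrib_left[symmetric] sum_phases[OF assms in_S])
  finally show ?thesis
    using in_S xy by auto
next
  case False
  then show ?thesis
    unfolding phase_twirl_def prod_proj_def phase_vec_def by auto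
qed

lemma sum_product_diagonal:
  assumes "finite A" and "\<And>i j. i \<noteq> j \<Longrightarrow> g (i, j) = 0"
  shows "(\<Sum>z\<in>A \<times> A. g z) = (\<Sum>m\<in>A. g (m, m))"
proof -
  have "(\<Sum>z\<in>A \<times> A. g z) = (\<Sum>i\<in>A. \<Sum>j\<in>A. g (i, j))"
    by (simp add: sum.cartesian_product split_def)
  also have "\<dots> = (\<Sum>i\<in>A. \<Sum>j\<in>A. if j = i then g (i, i) else 0)"
    using assms(2) by (intro sum.cong) auto
  finally show ?thesis
    using assms(1) by simp
qed

lemma psd_diagonal_form:
  assumes "psd d \<rho>"
  shows "0 \<le> Re (\<Sum>m<d. \<Sum>m'<d. cnj (w m) * \<rho> (m, m) (m', m') * w m')"
proof -
  define v where "v z = (if fst z = snd z then w (fst z) else 0)" for z :: "nat \<times> nat"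
  have "(\<Sum>x\<in>idx d. \<Sum>y\<in>idx d. cnj (v x) * \<rho> x y * v y)
      = (\<Sum>m<d. \<Sum>y\<in>idx d. cnj (w m) * \<rho> (m, m) y * v y)"
    unfolding idx_def by (subst sum_product_diagonal) (auto simp: v_def atLeast0LessThan)
  also have "\<dots> = (\<Sum>m<d. \<Sum>m'<d. cnj (w m) * \<rho> (m, m) (m', m') * w m')"
    unfolding idx_def by (subst sum_product_diagonal) (auto simp: v_def atLeast0LessThan)
  finally have form_eq: "(\<Sum>x\<in>idx d. \<Sum>y\<in>idx d. cnj (v x) * \<rho> x y * v y)
      = (\<Sum>m<d. \<Sum>m'<d. cnj (w m) * \<rho> (m, m) (m', m') * w m')" .
  from assms have "0 \<le> Re (\<Sum>x\<in>idx d. \<Sum>y\<in>idx d. cnj (v x) * \<rho> x y * v y)"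
    unfolding psd_def Let_def by blast
  then show ?thesis
    unfolding form_eq .
qed

lemma quadratic_form_const_offdiag:
  fixes d :: nat
  assumes "\<And>m m'. m < d \<Longrightarrow> m' < d \<Longrightarrow> G m m' = complex_of_real (if m = m' then \<alpha> else \<gamma>)"
  shows "(\<Sum>m<d. \<Sum>m'<d. cnj (w m) * G m m' * w m')
    = complex_of_real \<gamma> * (cnj (\<Sum>m<d. w m) * (\<Sum>m<d. w m))
      + complex_of_real (\<alpha> - \<gamma>) * (\<Sum>m<d. cnj (w m) * w m)"
proof -
  have row: "(\<Sum>m'<d. cnj (w m) * G m m' * w m')
      = complex_of_real \<gamma> * (cnj (w m) * (\<Sum>m'<d. w m')) + complex_of_real (\<alpha> - \<gamma>) * (cnj (w m) * w m)"
    if "m < d" for m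
  proof -
    have "(\<Sum>m'<d. cnj (w m) * G m m' * w m')
        = (\<Sum>m'<d. complex_of_real \<gamma> * (cnj (w m) * w m')
            + (if m' = m then complex_of_real (\<alpha> - \<gamma>) * (cnj (w m) * w m) else 0))"
      using that by (intro sum.cong) (auto simp: assms algebra_simps)
    then show ?thesis
      using that by (simp add: sum.distrib sum_distrib_left)
  qed
  have "(\<Sum>m<d. \<Sum>m'<d. cnj (w m) * G m m' * w m')
      = (\<Sum>m<d. complex_of_real \<gamma> * (cnj (w m) * (\<Sum>m'<d. w m'))
          + complex_of_real (\<alpha> - \<gamma>) * (cnj (w m) * w m))"
    by (intro sum.cong) (simp_all add: row)
  then show ?thesis
    by (simp only: sum.distrib sum_distrib_left[symmetric] sum_distrib_right[symmetric] cnj_sum)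
qed

lemma psd_partial_transpose_swap_op:
  assumes "d \<ge> 2" and "psd d (partial_transpose \<rho>)"
    and "\<forall>x\<in>idx d. \<forall>y\<in>idx d. \<rho> x y = swap_op \<alpha> \<beta> \<gamma> x y"
  shows "\<gamma> \<le> \<alpha>" and "0 \<le> \<alpha> + (real d - 1) * \<gamma>"
proof -
  have "partial_transpose \<rho> (m, m) (m', m') = complex_of_real (if m = m' then \<alpha> else \<gamma>)"
    if "m < d" "m' < d" for m m'
  proof -
    have "partial_transpose \<rho> (m, m) (m', m') = swap_op \<alpha> \<beta> \<gamma> (m, m') (m', m)"
      using that assms(3) by (simp add: partial_transpose_def idx_def)
    then show ?thesis
      by (simp add: swap_op_def)
  qed
  then have psd_form: "0 \<le> \<gamma> * Re (cnj (\<Sum>m<d. w m) * (\<Sum>m<d. w m))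
      + (\<alpha> - \<gamma>) * Re (\<Sum>m<d. cnj (w m) * w m)" for w
    using psd_diagonal_form[OF assms(2), of w] by (simp add: quadratic_form_const_offdiag)
  define w where "w m = of_bool (m = 0) - (of_bool (m = 1) :: complex)" for m :: nat
  have "(\<Sum>m<d. w m) = 0" and "(\<Sum>m<d. cnj (w m) * w m) = 2"
    using assms(1) by (simp_all add: w_def algebra_simps sum.distrib sum_subtractf)
  then show "\<gamma> \<le> \<alpha>"
    using psd_form[of w] by simp
  have "0 \<le> real d * (\<alpha> + (real d - 1) * \<gamma>)"
    using psd_form[of "\<lambda>_. 1"] by (simp add: algebra_simps)
  then show "0 \<le> \<alpha> + (real d - 1) * \<gamma>"
    using assms(1) by (simp add: zero_le_mult_iff)
qed

lemma separable_swap_op_diagonal: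
  assumes "\<alpha> \<ge> 0" and "\<beta> \<ge> 0"
  shows "separable d (swap_op \<alpha> \<beta> 0)"
proof -
  have "separable d (\<lambda>x y. of_bool (x = y) * complex_of_real (if fst x = snd x then \<alpha> else \<beta>))"
    using assms by (intro separable_diagonal) simp
  then show ?thesis
    by (rule separable_cong) (simp add: swap_op_def)
qed

lemma separable_swap_op_ones: "separable d (swap_op 1 1 1)"
proof -
  have "separable d (\<lambda>x y. complex_of_real (1 / 4 ^ d) * phase_twirl {..<d} (\<lambda>_. 1) x y)"
    by (intro separable_scale separable_phase_twirl) simp_all
  then show ?thesis
    by (rule separable_cong) (auto simp: phase_twirl_eq swap_op_def idx_def)
qed

definition sign_flip :: "nat \<Rightarrow> nat \<Rightarrow> complex" where
  "sign_flip j m = (if m = j then -1 else 1)"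

lemma sum_offdiag_pairs_containing:
  assumes "p < d"
  shows "(\<Sum>i<d. \<Sum>j\<in>{..<d} - {i}. of_bool (p = i \<or> p = j)) = 2 * (real d - 1)"
proof -
  have row: "(\<Sum>j\<in>{..<d} - {i}. of_bool (p = i \<or> p = j)) = (if i = p then real d - 1 else 1)"
    if "i < d" for i
    using that assms by (auto simp: card_Diff_singleton of_nat_diff Int_insert_right)
  have "(\<Sum>i<d. \<Sum>j\<in>{..<d} - {i}. of_bool (p = i \<or> p = j)) = (\<Sum>i<d. if i = p then real d - 1 else 1)"
    by (rule sum.cong) (simp_all only: row lessThan_iff)
  also have "\<dots> = 2 * (real d - 1)"
    using assms by (simp add: sum.If_cases Diff_eq[symmetric] card_Diff_singleton of_nat_diff)
  finally show ?thesis .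
qed

lemma sum_offdiag_pairs_eq:
  fixes p q d :: nat
  assumes "p < d" and "q < d" and "p \<noteq> q"
  shows "(\<Sum>i<d. \<Sum>j\<in>{..<d} - {i}. of_bool ((i, j) = (p, q) \<or> (i, j) = (q, p))) = (2::real)"
proof -
  have row: "(\<Sum>j\<in>{..<d} - {i}. of_bool ((i, j) = (p, q) \<or> (i, j) = (q, p))) = (of_bool (i = p) + of_bool (i = q) :: real)"
    if "i < d" for i
    using that assms by (auto simp: Int_insert_right)
  have "(\<Sum>i<d. \<Sum>j\<in>{..<d} - {i}. of_bool ((i, j) = (p, q) \<or> (i, j) = (q, p)))
      = (\<Sum>i<d. of_bool (i = p) + of_bool (i = q) :: real)"
    by (rule sum.cong) (simp_all only: row lessThan_iff)
  also have "\<dots> = 2"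
    using assms by (simp add: sum.distrib)
  finally show ?thesis .
qed

lemma sum_offdiag_pairs_covering:
  assumes "p < d" and "q < d"
  shows "(\<Sum>i<d. \<Sum>j\<in>{..<d} - {i}. of_bool (p \<in> {i, j} \<and> q \<in> {i, j}))
    = (if p = q then 2 * (real d - 1) else 2)"
proof (cases "p = q")
  case True
  then show ?thesis
    using sum_offdiag_pairs_containing[OF assms(1)] by simp
next
  case False
  have "(\<Sum>i<d. \<Sum>j\<in>{..<d} - {i}. of_bool (p \<in> {i, j} \<and> q \<in> {i, j}))
      = (\<Sum>i<d. \<Sum>j\<in>{..<d} - {i}. of_bool ((i, j) = (p, q) \<or> (i, j) = (q, p)) :: real)"
    using False by (intro sum.cong refl) auto
  then show ?thesis
    using sum_offdiag_pairs_eq[OF assms False] False by simp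
qed

lemma sum_phase_twirl_pairs:
  assumes "x \<in> idx d"
  shows "(\<Sum>i<d. \<Sum>j\<in>{..<d} - {i}. phase_twirl {i, j} (sign_flip j) x y)
    = 32 * swap_op (real d - 1) 1 (-1) x y"
proof -
  obtain p q p' q' where x: "x = (p, q)" and y: "y = (p', q')"
    by (cases x, cases y)
  have "p < d" "q < d"
    using assms x by (auto simp: idx_def)
  define sgn :: real where "sgn = (if x = y then 1 else if x = prod.swap y then -1 else 0)"
  have pair_term: "phase_twirl {i, j} (sign_flip j) x y
      = complex_of_real (16 * (of_bool (p \<in> {i, j} \<and> q \<in> {i, j}) * sgn))"
    if "j \<noteq> i" for i j
    using that by (auto simp: phase_twirl_eq sign_flip_def sgn_def x y)
  have "(\<Sum>i<d. \<Sum>j\<in>{..<d} - {i}. phase_twirl {i, j} (sign_flip j) x y)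
      = (\<Sum>i<d. \<Sum>j\<in>{..<d} - {i}. complex_of_real (16 * (of_bool (p \<in> {i, j} \<and> q \<in> {i, j}) * sgn)))"
    by (intro sum.cong refl) (simp add: pair_term)
  also have "\<dots> = complex_of_real (16 * ((\<Sum>i<d. \<Sum>j\<in>{..<d} - {i}. of_bool (p \<in> {i, j} \<and> q \<in> {i, j})) * sgn))"
    by (simp only: of_real_sum[symmetric] sum_distrib_left[symmetric] sum_distrib_right[symmetric])
  also have "\<dots> = 32 * swap_op (real d - 1) 1 (-1) x y"
    unfolding sum_offdiag_pairs_covering[OF \<open>p < d\<close> \<open>q < d\<close>]
    by (auto simp: swap_op_def sgn_def x y)
  finally show ?thesis .
qed

lemma separable_swap_op_pairs: "separable d (swap_op (real d - 1) 1 (-1))"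
proof -
  have "separable d (\<lambda>x y. complex_of_real (1 / 32)
      * (\<Sum>i<d. \<Sum>j\<in>{..<d} - {i}. phase_twirl {i, j} (sign_flip j) x y))"
    by (intro separable_scale separable_sum separable_phase_twirl) simp_all
  then show ?thesis
    by (rule separable_cong) (simp add: sum_phase_twirl_pairs)
qed

lemma separable_swap_op:
  assumes "\<bar>\<gamma>\<bar> \<le> \<beta>" and "\<gamma> \<le> \<alpha>" and "0 \<le> \<alpha> + (real d - 1) * \<gamma>"
  shows "separable d (swap_op \<alpha> \<beta> \<gamma>)"
proof (cases "\<gamma> \<ge> 0")
  case True
  have "separable d (\<lambda>x y. complex_of_real \<gamma> * swap_op 1 1 1 x y + swap_op (\<alpha> - \<gamma>) (\<beta> - \<gamma>) 0 x y)"
    using assms True by (intro separable_add separable_scale separable_swap_op_ones separable_swap_op_diagonal) simp_all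
  then show ?thesis
    by (rule separable_cong) (simp add: swap_op_def)
next
  case False
  have "separable d (\<lambda>x y. complex_of_real (- \<gamma>) * swap_op (real d - 1) 1 (-1) x y
      + swap_op (\<alpha> + (real d - 1) * \<gamma>) (\<beta> + \<gamma>) 0 x y)"
    using assms False by (intro separable_add separable_scale separable_swap_op_pairs separable_swap_op_diagonal) simp_all
  then show ?thesis
    by (rule separable_cong) (simp add: swap_op_def algebra_simps)
qed

theorem mainTheorem7:
  fixes d :: nat and b c :: real
  assumes "d \<ge> 2" and "b \<ge> 0" and "c \<ge> 0" and "coef_a d b c \<ge> 0"
    and "psd d (partial_transpose (rho_bc d b c))"
  shows "separable d (rho_bc d b c)"
proof -
  let ?\<alpha> = "coef_a d b c" and ?\<beta> = "(b + c) / 2" and ?\<gamma> = "(c - b) / 2"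
  have entries: "\<forall>x\<in>idx d. \<forall>y\<in>idx d. rho_bc d b c x y = swap_op ?\<alpha> ?\<beta> ?\<gamma> x y"
    by (simp add: rho_bc_eq_swap_op)
  have "\<bar>?\<gamma>\<bar> \<le> ?\<beta>"
    using assms(2,3) by simp
  moreover have "?\<gamma> \<le> ?\<alpha>" and "0 \<le> ?\<alpha> + (real d - 1) * ?\<gamma>"
    using psd_partial_transpose_swap_op[OF assms(1,5) entries] by simp_all
  ultimately have "separable d (swap_op ?\<alpha> ?\<beta> ?\<gamma>)"
    by (rule separable_swap_op)
  then show ?thesis
    by (rule separable_cong) (simp add: rho_bc_eq_swap_op)
qed

end
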